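(* Let $k,r\geq 0$ be integers. Every $r$-shallow minor of a $k$-gap-cover-planar graph is $(2r+1)k$-gap-cover-planar.
   Context: All graphs are simple, finite and undirected. A drawing of a graph $G$ in the plane represents each vertex by a distinct point and each edge $vw$ by a non-self-intersecting curve between the points of $v$ and $w$, such that no three edges cross at a single point. Two distinct edges are independent if they share no endpoint. For a drawing $D$ of $G$, let $D^\times$ be the set of unordered pairs $\{e,f\}$ of independent edges that cross in $D$. A bearing of $D$ is a set $B$ of ordered pairs $(e,f)$ with $\{e,f\}\in D^\times$ such that for each $\{e,f\}\in D^\times$ at least one of $(e,f),(f,e)$ lies in $B$. For a bearing $B$, a $B$-cover of an edge $e$ is a set $C\subseteq V(G)$ such that every edge $f$ with $(e,f)\in B$ has an endpoint in $C$. A drawing $D$ is $k$-gap-cover-planar if there is a bearing $B$ of $D$ such that each edge $vw\in E(G)$ has a $B$-cover contained in $V(G)\setminus\{v,w\}$ of size at most $k$. A graph is $k$-gap-cover-planar if it has a $k$-gap-cover-planar drawing in the plane. A model of $H$ in $G$ assigns disjoint non-empty connected subgraphs $\mu(v)$ of $G$ to the vertices $v\in V(H)$ with an edge of $G$ between $\mu(v)$ and $\mu(w)$ for every $vw\in E(H)$; it is $r$-shallow if each $\mu(v)$ has radius at most $r$, and then $H$ is an $r$-shallow minor of $G$. *)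

theory Defs
  imports "HOL-Analysis.Analysis"
begin

definition simple_graph :: "'a set \<Rightarrow> 'a set set \<Rightarrow> bool" where
  "simple_graph V E \<longleftrightarrow> finite V \<and>
     (\<forall>e\<in>E. \<exists>v w. e = {v, w} \<and> v \<noteq> w \<and> v \<in> V \<and> w \<in> V)"

definition edge_interior :: "('a \<Rightarrow> complex) \<Rightarrow> ('a set \<Rightarrow> real \<Rightarrow> complex) \<Rightarrow> 'a set \<Rightarrow> complex set" where
  "edge_interior pos cv e = path_image (cv e) - pos ` e"

definition drawing ::
  "'a set \<Rightarrow> 'a set set \<Rightarrow> ('a \<Rightarrow> complex) \<Rightarrow> ('a set \<Rightarrow> real \<Rightarrow> complex) \<Rightarrow> bool" where
  "drawing V E pos cv \<longleftrightarrow>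
     inj_on pos V \<and>
     (\<forall>e\<in>E. arc (cv e) \<and>
        (\<exists>v w. e = {v, w} \<and> pathstart (cv e) = pos v \<and> pathfinish (cv e) = pos w) \<and>
        (\<forall>u\<in>V. pos u \<in> path_image (cv e) \<longrightarrow> u \<in> e)) \<and>
     (\<forall>e\<in>E. \<forall>f\<in>E. \<forall>g\<in>E. e \<noteq> f \<and> e \<noteq> g \<and> f \<noteq> g \<longrightarrow>
        edge_interior pos cv e \<inter> edge_interior pos cv f \<inter> edge_interior pos cv g = {})"

definition crossing_pairs ::
  "'a set set \<Rightarrow> ('a \<Rightarrow> complex) \<Rightarrow> ('a set \<Rightarrow> real \<Rightarrow> complex) \<Rightarrow> 'a set set set" where
  "crossing_pairs E pos cv =
     {{e, f} | e f. e \<in> E \<and> f \<in> E \<and> e \<inter> f = {} \<and>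
        path_image (cv e) \<inter> path_image (cv f) \<noteq> {}}"

definition bearing ::
  "'a set set \<Rightarrow> ('a \<Rightarrow> complex) \<Rightarrow> ('a set \<Rightarrow> real \<Rightarrow> complex) \<Rightarrow> ('a set \<times> 'a set) set \<Rightarrow> bool" where
  "bearing E pos cv B \<longleftrightarrow>
     (\<forall>(e, f)\<in>B. {e, f} \<in> crossing_pairs E pos cv) \<and>
     (\<forall>e f. {e, f} \<in> crossing_pairs E pos cv \<longrightarrow> (e, f) \<in> B \<or> (f, e) \<in> B)"

definition B_cover :: "('a set \<times> 'a set) set \<Rightarrow> 'a set \<Rightarrow> 'a set \<Rightarrow> bool" where
  "B_cover B e C \<longleftrightarrow> (\<forall>f. (e, f) \<in> B \<longrightarrow> f \<inter> C \<noteq> {})"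

definition gap_cover_planar_drawing ::
  "nat \<Rightarrow> 'a set \<Rightarrow> 'a set set \<Rightarrow> ('a \<Rightarrow> complex) \<Rightarrow> ('a set \<Rightarrow> real \<Rightarrow> complex) \<Rightarrow> bool" where
  "gap_cover_planar_drawing k V E pos cv \<longleftrightarrow>
     drawing V E pos cv \<and>
     (\<exists>B. bearing E pos cv B \<and>
        (\<forall>e\<in>E. \<exists>C. C \<subseteq> V - e \<and> finite C \<and> card C \<le> k \<and> B_cover B e C))"

definition gap_cover_planar :: "nat \<Rightarrow> 'a set \<Rightarrow> 'a set set \<Rightarrow> bool" where
  "gap_cover_planar k V E \<longleftrightarrow> (\<exists>pos cv. gap_cover_planar_drawing k V E pos cv)"

text \<open>Walks in a graph (Vs, Es) given as vertex lists; a list of length l+1 is a walk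
  of length l.\<close>

definition walk :: "'a set \<Rightarrow> 'a set set \<Rightarrow> 'a list \<Rightarrow> bool" where
  "walk Vs Es xs \<longleftrightarrow> xs \<noteq> [] \<and> set xs \<subseteq> Vs \<and>
     (\<forall>i. Suc i < length xs \<longrightarrow> {xs ! i, xs ! Suc i} \<in> Es)"

definition connected_graph :: "'a set \<Rightarrow> 'a set set \<Rightarrow> bool" where
  "connected_graph Vs Es \<longleftrightarrow> Vs \<noteq> {} \<and>
     (\<forall>x\<in>Vs. \<forall>y\<in>Vs. \<exists>xs. walk Vs Es xs \<and> hd xs = x \<and> last xs = y)"

definition radius_le :: "'a set \<Rightarrow> 'a set set \<Rightarrow> nat \<Rightarrow> bool" where
  "radius_le Vs Es r \<longleftrightarrow>
     (\<exists>c\<in>Vs. \<forall>x\<in>Vs. \<exists>xs. walk Vs Es xs \<and> hd xs = c \<and> last xs = x \<and> length xs \<le> r + 1)"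

definition subgraph :: "'a set \<Rightarrow> 'a set set \<Rightarrow> 'a set \<Rightarrow> 'a set set \<Rightarrow> bool" where
  "subgraph Vs Es V E \<longleftrightarrow> Vs \<subseteq> V \<and> Es \<subseteq> E \<and> (\<forall>e\<in>Es. e \<subseteq> Vs)"

definition shallow_model ::
  "nat \<Rightarrow> 'b set \<Rightarrow> 'b set set \<Rightarrow> 'a set \<Rightarrow> 'a set set \<Rightarrow> ('b \<Rightarrow> 'a set \<times> 'a set set) \<Rightarrow> bool" where
  "shallow_model r VH EH VG EG mu \<longleftrightarrow>
     (\<forall>v\<in>VH. subgraph (fst (mu v)) (snd (mu v)) VG EG \<and>
        fst (mu v) \<noteq> {} \<and> connected_graph (fst (mu v)) (snd (mu v)) \<and>
        radius_le (fst (mu v)) (snd (mu v)) r) \<and>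
     (\<forall>v\<in>VH. \<forall>w\<in>VH. v \<noteq> w \<longrightarrow> fst (mu v) \<inter> fst (mu w) = {}) \<and>
     (\<forall>v w. {v, w} \<in> EH \<longrightarrow> (\<exists>x\<in>fst (mu v). \<exists>y\<in>fst (mu w). {x, y} \<in> EG))"

definition shallow_minor :: "nat \<Rightarrow> 'b set \<Rightarrow> 'b set set \<Rightarrow> 'a set \<Rightarrow> 'a set set \<Rightarrow> bool" where
  "shallow_minor r VH EH VG EG \<longleftrightarrow> (\<exists>mu. shallow_model r VH EH VG EG mu)"

end

(*
  Choose in every branch set of the model of H a centre from which each of its vertices is reached
  by a walk of length at most r.  An edge vw of H is routed in G by a walk of at most 2r+1 edges:
  from the centre of v through its branch set, across an edge of G joining the two branch sets, and
  on through the branch set of w to its centre.  Place every vertex of H at (the point of) its centre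
  and draw every edge of H close to the curve of its route, by polygonal approximations in general
  position; drawn close enough, two edges of H meet only if the curves of their routes meet.  Hence
  if two independent edges of H cross, then edges a, b of their routes cross in G, and a, b are
  independent because the branch sets are disjoint; orient the crossing in H as B orients {a, b}.
  The B-covers of the at most 2r+1 route edges of an edge e have at most (2r+1)k vertices in total,
  and the vertices of H whose branch sets contain one of them cover e.
*)
theory Submission
  imports Defs
begin

section \<open>Polygonal paths in general position\<close>

fun polyline :: "'a::real_normed_vector list \<Rightarrow> real \<Rightarrow> 'a" where
  "polyline [] = linepath 0 0"
| "polyline [x] = linepath x x"
| "polyline (x # y # ys) = linepath x y +++ polyline (y # ys)"

fun polyline_image :: "'a::real_normed_vector list \<Rightarrow> 'a set" where
  "polyline_image [] = {}"
| "polyline_image [x] = {x}"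
| "polyline_image (x # y # ys) = closed_segment x y \<union> polyline_image (y # ys)"

fun polyline_segments :: "'a list \<Rightarrow> ('a \<times> 'a) set" where
  "polyline_segments (x # y # ys) = insert (x, y) (polyline_segments (y # ys))"
| "polyline_segments _ = {}"

lemma pathstart_polyline: "xs \<noteq> [] \<Longrightarrow> pathstart (polyline xs) = hd xs"
  by (induction xs rule: polyline.induct) auto

lemma pathfinish_polyline: "xs \<noteq> [] \<Longrightarrow> pathfinish (polyline xs) = last xs"
  by (induction xs rule: polyline.induct) auto

lemma path_polyline: "path (polyline xs)"
  by (induction xs rule: polyline.induct) (auto simp: pathstart_polyline path_const)

lemma path_image_polyline: "xs \<noteq> [] \<Longrightarrow> path_image (polyline xs) = polyline_image xs"
  by (induction xs rule: polyline.induct) (auto simp: path_image_join pathstart_polyline)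

lemma finite_polyline_segments: "finite (polyline_segments xs)"
  by (induction xs rule: polyline_segments.induct) auto

lemma polyline_image_eq:
  "polyline_image xs = set xs \<union> (\<Union>(c, d)\<in>polyline_segments xs. closed_segment c d)"
  by (induction xs rule: polyline_image.induct) auto

lemma finite_Int_polyline_image:
  assumes "\<forall>(c, d)\<in>polyline_segments xs. finite (S \<inter> closed_segment c d)"
  shows "finite (S \<inter> polyline_image xs)"
proof (rule finite_subset)
  show "S \<inter> polyline_image xs \<subseteq>
      set xs \<union> (\<Union>cd\<in>polyline_segments xs. S \<inter> closed_segment (fst cd) (snd cd))"
    by (auto simp: polyline_image_eq case_prod_unfold)
  show "finite (set xs \<union> (\<Union>cd\<in>polyline_segments xs. S \<inter> closed_segment (fst cd) (snd cd)))"
    using assms by (intro finite_UnI finite_UN_I) (auto simp: finite_polyline_segments case_prod_unfold)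
qed

lemma closed_segment_Int_eq_empty:
  fixes a q :: "'a::real_vector"
  assumes "a \<notin> A" and "\<forall>z\<in>A. q \<notin> affine hull {a, z}"
  shows "closed_segment a q \<inter> A = {}"
proof (rule ccontr)
  assume "closed_segment a q \<inter> A \<noteq> {}"
  then obtain z where z: "z \<in> closed_segment a q" "z \<in> A" by blast
  have "collinear {a, z, q}"
    by (rule collinear_subset[OF collinear_closed_segment[of a q]]) (use z in auto)
  then have "q \<in> affine hull {a, z}"
    using z assms(1) by (intro collinear_3_imp_in_affine_hull) auto
  then show False using assms(2) z by blast
qed

lemma finite_closed_segment_Int_closed_segment:
  fixes p q c d :: "'a::real_vector"
  assumes "q \<notin> affine hull {c, d}"
  shows "finite (closed_segment p q \<inter> closed_segment c d)"
proof (rule ccontr)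
  let ?S = "closed_segment p q \<inter> closed_segment c d"
  assume inf: "infinite ?S"
  then obtain u where u: "u \<in> ?S" by (metis finite.emptyI ex_in_conv)
  from inf have "infinite (?S - {u})" by simp
  then obtain v where v: "v \<in> ?S" "v \<noteq> u" by (metis finite.emptyI ex_in_conv Diff_iff singletonI)
  have "collinear {u, v, q}"
    by (rule collinear_subset[OF collinear_closed_segment[of p q]]) (use u v in auto)
  then have "q \<in> affine hull {u, v}"
    using v(2) by (intro collinear_3_imp_in_affine_hull) auto
  also have "affine hull {u, v} \<subseteq> affine hull {c, d}"
  proof (rule hull_minimal)
    have "closed_segment c d \<subseteq> affine hull {c, d}"
      unfolding segment_convex_hull by (rule convex_hull_subset_affine_hull)
    then show "{u, v} \<subseteq> affine hull {c, d}" using u v by blast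
  qed simp
  finally show False using assms by blast
qed

lemma interior_Union_affine_hull_pairs:
  fixes L :: "('a::euclidean_space \<times> 'a) set"
  assumes "finite L" and "2 \<le> DIM('a)"
  shows "interior (\<Union>(c, d)\<in>L. affine hull {c, d}) = {}"
  using assms(1)
proof (induction L rule: finite_induct)
  case (insert cd L)
  obtain c d where cd: "cd = (c, d)" by force
  have closed: "closed (\<Union>(c, d)\<in>L. affine hull {c, d})"
    using insert(1) by (intro closed_Union) auto
  have line: "interior (affine hull {c, d}) = {}"
    using assms(2) by (intro empty_interior_affine_hull) (auto simp: card_insert_if)
  have "interior ((\<Union>(c, d)\<in>L. affine hull {c, d}) \<union> affine hull {c, d}) = {}"
    using interior_closed_Un_empty_interior[OF closed line] insert(3) by simp
  then show ?case by (simp add: cd Un_commute)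
qed simp

lemma exists_point_off_lines:
  fixes L :: "('a::euclidean_space \<times> 'a) set"
  assumes "finite L" "\<delta> > 0" "2 \<le> DIM('a)"
  obtains q where "dist q t < \<delta>" "\<forall>(c, d)\<in>L. q \<notin> affine hull {c, d}"
proof -
  have "\<not> ball t \<delta> \<subseteq> (\<Union>(c, d)\<in>L. affine hull {c, d})"
  proof
    assume "ball t \<delta> \<subseteq> (\<Union>(c, d)\<in>L. affine hull {c, d})"
    then have "ball t \<delta> \<subseteq> interior (\<Union>(c, d)\<in>L. affine hull {c, d})"
      by (simp add: interior_maximal)
    then show False
      using interior_Union_affine_hull_pairs[OF assms(1,3)] assms(2) by auto
  qed
  then obtain q where q: "q \<in> ball t \<delta>" "q \<notin> (\<Union>(c, d)\<in>L. affine hull {c, d})"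
    by blast
  have "dist q t < \<delta>" using q(1) by (simp add: dist_commute)
  moreover have "\<forall>(c, d)\<in>L. q \<notin> affine hull {c, d}" using q(2) by blast
  ultimately show ?thesis by (rule that)
qed

lemma exists_generic_point_near:
  fixes t :: "'a::euclidean_space"
  assumes "finite A" "finite OL" "\<delta> > 0" "a \<notin> A" "b \<notin> A" "2 \<le> DIM('a)"
  obtains q where "dist q t < \<delta>" "closed_segment a q \<inter> A = {}" "closed_segment q b \<inter> A = {}"
    "\<forall>(c, d)\<in>OL. finite (closed_segment a q \<inter> closed_segment c d) \<and>
       finite (closed_segment q b \<inter> closed_segment c d)"
proof -
  \<comment> \<open>q avoids the lines joining a or b to points of A and the lines carrying the segments in OL\<close>
  obtain q where q: "dist q t < \<delta>"
    "\<forall>(c, d)\<in>OL \<union> Pair a ` A \<union> Pair b ` A. q \<notin> affine hull {c, d}"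
    using exists_point_off_lines[of "OL \<union> Pair a ` A \<union> Pair b ` A" \<delta> t] assms by auto
  have "closed_segment a q \<inter> A = {}" "closed_segment b q \<inter> A = {}"
    using q(2) assms(4,5) by (auto intro!: closed_segment_Int_eq_empty)
  moreover have "\<forall>(c, d)\<in>OL. finite (closed_segment a q \<inter> closed_segment c d) \<and>
       finite (closed_segment b q \<inter> closed_segment c d)"
    using q(2) by (auto intro!: finite_closed_segment_Int_closed_segment)
  ultimately show ?thesis
    using that q(1) by (simp add: closed_segment_commute[of q b])
qed

lemma exists_generic_polyline_near:
  fixes ts :: "'a::euclidean_space list"
  assumes "finite A" "finite OL" "\<delta> > 0" "b \<notin> A" "2 \<le> DIM('a)"
  shows "a \<notin> A \<Longrightarrow> ts \<noteq> [] \<Longrightarrow> \<exists>qs. list_all2 (\<lambda>q t. dist q t < \<delta>) qs ts \<and>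
     polyline_image (a # qs @ [b]) \<inter> A = {} \<and>
     (\<forall>(c, d)\<in>OL. finite (polyline_image (a # qs @ [b]) \<inter> closed_segment c d))"
proof (induction ts arbitrary: a)
  case (Cons t ts)
  obtain q where q: "dist q t < \<delta>" "closed_segment a q \<inter> A = {}" "closed_segment q b \<inter> A = {}"
    "\<forall>(c, d)\<in>OL. finite (closed_segment a q \<inter> closed_segment c d) \<and>
       finite (closed_segment q b \<inter> closed_segment c d)"
    using exists_generic_point_near[of A OL \<delta> a b t] assms Cons.prems(1) by blast
  show ?case
  proof (cases "ts = []")
    case True
    have img: "polyline_image (a # [q] @ [b]) = closed_segment a q \<union> closed_segment q b" by auto
    have "polyline_image (a # [q] @ [b]) \<inter> A = {}"
      unfolding img using q(2,3) by blast
    moreover have "finite (polyline_image (a # [q] @ [b]) \<inter> closed_segment c d)"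
      if "(c, d) \<in> OL" for c d
      unfolding img Int_Un_distrib2 using q(4) that by blast
    ultimately show ?thesis
      using True q(1) by (intro exI[of _ "[q]"]) auto
  next
    case False
    have "q \<notin> A" using q(2) by auto
    then obtain qs where qs: "list_all2 (\<lambda>q t. dist q t < \<delta>) qs ts"
      "polyline_image (q # qs @ [b]) \<inter> A = {}"
      "\<forall>(c, d)\<in>OL. finite (polyline_image (q # qs @ [b]) \<inter> closed_segment c d)"
      using Cons.IH False by blast
    have img: "polyline_image (a # (q # qs) @ [b]) = closed_segment a q \<union> polyline_image (q # qs @ [b])"
      by simp
    have "polyline_image (a # (q # qs) @ [b]) \<inter> A = {}"
      unfolding img using q(2) qs(2) by blast
    moreover have "finite (polyline_image (a # (q # qs) @ [b]) \<inter> closed_segment c d)"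
      if "(c, d) \<in> OL" for c d
      unfolding img Int_Un_distrib2 using q(4) qs(3) that by blast
    ultimately show ?thesis
      using qs(1) q(1) by (intro exI[of _ "q # qs"]) auto
  qed
qed simp

fun small_steps :: "real \<Rightarrow> 'a::metric_space list \<Rightarrow> bool" where
  "small_steps d (x # y # ys) \<longleftrightarrow> dist x y < d \<and> small_steps d (y # ys)"
| "small_steps d _ \<longleftrightarrow> True"

lemma small_stepsI:
  "(\<And>i. Suc i < length xs \<Longrightarrow> dist (xs ! i) (xs ! Suc i) < d) \<Longrightarrow> small_steps d xs"
proof (induction d xs rule: small_steps.induct)
  case (1 d x y ys)
  have "small_steps d (y # ys)"
  proof (rule "1.IH")
    fix i assume "Suc i < length (y # ys)"
    then show "dist ((y # ys) ! i) ((y # ys) ! Suc i) < d" using "1.prems"[of "Suc i"] by simp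
  qed
  then show ?case using "1.prems"[of 0] by simp
qed simp_all

lemma polyline_image_near:
  fixes qs ts :: "'a::real_normed_vector list"
  assumes "list_all2 (\<lambda>q t. dist q t < \<delta>) qs ts" "small_steps \<delta>' ts" "x \<in> polyline_image qs"
    and "\<delta>' \<ge> 0"
  shows "\<exists>t\<in>set ts. dist x t < \<delta> + \<delta>'"
  using assms(1-3)
proof (induction qs arbitrary: ts rule: polyline_image.induct)
  case (2 q)
  then obtain t where "ts = [t]" "dist q t < \<delta>" by (auto simp: list_all2_Cons1)
  then show ?case using "2.prems"(3) assms(4) by auto
next
  case (3 q q' qs)
  from "3.prems"(1) obtain t t' ts' where ts: "ts = t # t' # ts'"
    by (auto simp: list_all2_Cons1)
  show ?case
  proof (cases "x \<in> closed_segment q q'")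
    case True
    have "dist q t < \<delta>" "dist q' t' < \<delta>" "dist t t' < \<delta>'"
      using "3.prems"(1,2) ts by auto
    then have "dist t q < \<delta>" "dist t' q' < \<delta>" "dist t t' < \<delta>'"
      by (simp_all add: dist_commute)
    then have "q \<in> ball t (\<delta> + \<delta>')" "q' \<in> ball t (\<delta> + \<delta>')"
      using assms(4) dist_triangle[of t q' t'] by auto
    then have "closed_segment q q' \<subseteq> ball t (\<delta> + \<delta>')"
      by (simp add: closed_segment_subset)
    then have "dist t x < \<delta> + \<delta>'" using True by auto
    then show ?thesis using ts by (auto simp: dist_commute)
  next
    case False
    then have "x \<in> polyline_image (q' # qs)" using "3.prems"(3) by simp
    moreover have "list_all2 (\<lambda>q t. dist q t < \<delta>) (q' # qs) (t' # ts')"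
      using "3.prems"(1) ts by simp
    moreover have "small_steps \<delta>' (t' # ts')" using "3.prems"(2) ts by simp
    ultimately obtain s where "s \<in> set (t' # ts')" "dist x s < \<delta> + \<delta>'"
      using "3.IH" by blast
    then show ?thesis using ts by auto
  qed
qed simp

lemma exists_polyline_approximation:
  fixes g :: "real \<Rightarrow> 'a::euclidean_space"
  assumes "path g" "\<epsilon> > 0" "finite A" "finite OL" "pathstart g \<notin> A" "pathfinish g \<notin> A"
    and "2 \<le> DIM('a)"
  obtains L where "L \<noteq> []" "hd L = pathstart g" "last L = pathfinish g"
    "polyline_image L \<inter> A = {}"
    "\<forall>(c, d)\<in>OL. finite (polyline_image L \<inter> closed_segment c d)"
    "\<forall>x\<in>polyline_image L. \<exists>y\<in>path_image g. dist x y < \<epsilon>"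
proof -
  have "uniformly_continuous_on {0..1} g"
    using assms(1) compact_uniformly_continuous unfolding path_def by blast
  then obtain d where d: "d > 0"
    "\<And>s t. s \<in> {0..1} \<Longrightarrow> t \<in> {0..1} \<Longrightarrow> dist s t < d \<Longrightarrow> dist (g s) (g t) < \<epsilon>/2"
    unfolding uniformly_continuous_on_def using assms(2) by (metis half_gt_zero)
  \<comment> \<open>sample g at the points i/n, 0 \<le> i \<le> n, and perturb the interior samples\<close>
  define n :: nat where "n = nat \<lceil>1/d\<rceil> + 2"
  have "n \<ge> 2" "1/d < real n"
    unfolding n_def by linarith+
  then have n: "n \<ge> 2" "1 / real n < d"
    using d(1) by (simp_all add: divide_less_eq mult.commute)
  define f where "f i = g (real i / real n)" for i
  define T where "T = map f [0..<Suc n]"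
  define ts where "ts = map f [1..<n]"
  have "[0..<Suc n] = 0 # [1..<n] @ [n]"
    using n(1) by (simp add: upt_conv_Cons upt_Suc_append)
  then have T: "T = f 0 # ts @ [f n]" unfolding T_def ts_def by simp
  have f0: "f 0 = pathstart g" and fn: "f n = pathfinish g"
    using n(1) by (auto simp: f_def pathstart_def pathfinish_def)
  obtain qs where qs: "list_all2 (\<lambda>q t. dist q t < \<epsilon>/2) qs ts"
     "polyline_image (f 0 # qs @ [f n]) \<inter> A = {}"
     "\<forall>(c, d)\<in>OL. finite (polyline_image (f 0 # qs @ [f n]) \<inter> closed_segment c d)"
    using exists_generic_polyline_near[of A OL "\<epsilon>/2" "f n" "f 0" ts] assms f0 fn n(1)
    by (auto simp: ts_def)
  define L where "L = f 0 # qs @ [f n]"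
  have "list_all2 (\<lambda>q t. dist q t < \<epsilon>/2) L T"
    unfolding L_def T using qs(1) assms(2) by (simp add: list_all2_appendI)
  moreover have "small_steps (\<epsilon>/2) T"
  proof (rule small_stepsI)
    fix i assume i: "Suc i < length T"
    then have i: "Suc i \<le> n" unfolding T_def by simp
    then have T_nth: "T ! i = f i" "T ! Suc i = f (Suc i)"
      unfolding T_def by (simp_all del: upt_Suc)
    have "dist (f i) (f (Suc i)) < \<epsilon>/2"
      unfolding f_def
    proof (rule d(2))
      show "dist (real i / real n) (real (Suc i) / real n) < d"
        using n by (simp add: dist_real_def diff_divide_distrib[symmetric])
      show "real i / real n \<in> {0..1}" "real (Suc i) / real n \<in> {0..1}"
        using i by auto
    qed
    then show "dist (T ! i) (T ! Suc i) < \<epsilon>/2" by (simp only: T_nth)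
  qed
  ultimately have "\<forall>x\<in>polyline_image L. \<exists>t\<in>set T. dist x t < \<epsilon>/2 + \<epsilon>/2"
    using polyline_image_near[where \<delta>="\<epsilon>/2" and \<delta>'="\<epsilon>/2"] assms(2) by auto
  moreover have "set T \<subseteq> path_image g"
    unfolding T_def f_def path_image_def by auto
  ultimately have "\<forall>x\<in>polyline_image L. \<exists>y\<in>path_image g. dist x y < \<epsilon>"
    by fastforce
  then show ?thesis
    using qs(2,3) f0 fn by (intro that[of L]) (simp_all add: L_def)
qed

definition polyline_follows :: "'a::real_normed_vector set \<Rightarrow> (real \<Rightarrow> 'a) \<Rightarrow> real \<Rightarrow> 'a list \<Rightarrow> bool" where
  "polyline_follows V p \<epsilon> L \<longleftrightarrow> L \<noteq> [] \<and> hd L = pathstart p \<and> last L = pathfinish p \<and>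
     polyline_image L \<inter> V \<subseteq> {pathstart p, pathfinish p} \<and>
     (\<forall>x\<in>polyline_image L. \<exists>y\<in>path_image p. dist x y < \<epsilon>)"

definition generic_polylines ::
  "'a::real_normed_vector set \<Rightarrow> ('i \<Rightarrow> real \<Rightarrow> 'a) \<Rightarrow> real \<Rightarrow> 'i set \<Rightarrow> ('i \<Rightarrow> 'a list) \<Rightarrow> bool" where
  "generic_polylines V g \<epsilon> S pl \<longleftrightarrow>
     (\<forall>i\<in>S. polyline_follows V (g i) \<epsilon> (pl i)) \<and>
     (\<forall>i\<in>S. \<forall>j\<in>S. i \<noteq> j \<longrightarrow> finite (polyline_image (pl i) \<inter> polyline_image (pl j))) \<and>
     (\<forall>i\<in>S. \<forall>j\<in>S. \<forall>l\<in>S. i \<noteq> j \<and> i \<noteq> l \<and> j \<noteq> l \<longrightarrow>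
        polyline_image (pl i) \<inter> polyline_image (pl j) \<inter> polyline_image (pl l) \<subseteq> V)"

lemma generic_polylines_follows:
  assumes "generic_polylines V g \<epsilon> S pl" "i \<in> S"
  shows "polyline_follows V (g i) \<epsilon> (pl i)"
  using assms unfolding generic_polylines_def by simp

lemma generic_polylines_triple:
  assumes "generic_polylines V g \<epsilon> S pl" "i \<in> S" "j \<in> S" "l \<in> S" "i \<noteq> j" "i \<noteq> l" "j \<noteq> l"
  shows "polyline_image (pl i) \<inter> polyline_image (pl j) \<inter> polyline_image (pl l) \<subseteq> V"
proof -
  have "\<forall>i\<in>S. \<forall>j\<in>S. \<forall>l\<in>S. i \<noteq> j \<and> i \<noteq> l \<and> j \<noteq> l \<longrightarrow>
      polyline_image (pl i) \<inter> polyline_image (pl j) \<inter> polyline_image (pl l) \<subseteq> V"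
    using assms(1) unfolding generic_polylines_def by (elim conjE)
  then show ?thesis using assms(2-7) by simp
qed

lemma generic_polylines_insert:
  assumes "generic_polylines V g \<epsilon> S pl" "i \<notin> S" "polyline_follows V (g i) \<epsilon> L"
    and "\<forall>j\<in>S. finite (polyline_image L \<inter> polyline_image (pl j))"
    and "\<forall>j\<in>S. \<forall>l\<in>S. j \<noteq> l \<longrightarrow> polyline_image L \<inter> polyline_image (pl j) \<inter> polyline_image (pl l) \<subseteq> V"
  shows "generic_polylines V g \<epsilon> (insert i S) (pl(i := L))"
  using assms unfolding generic_polylines_def by (auto simp: Int_commute)

lemma exists_generic_polylines:
  fixes g :: "'i \<Rightarrow> real \<Rightarrow> 'a::euclidean_space"
  assumes "finite S" "finite V" "\<epsilon> > 0" "2 \<le> DIM('a)"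
    and "\<forall>i\<in>S. path (g i) \<and> pathstart (g i) \<in> V \<and> pathfinish (g i) \<in> V"
  shows "\<exists>pl. generic_polylines V g \<epsilon> S pl"
  using assms(1,5)
proof (induction S rule: finite_induct)
  case empty
  show ?case by (simp add: generic_polylines_def)
next
  case (insert i S)
  then obtain pl where pl: "generic_polylines V g \<epsilon> S pl" by auto
  \<comment> \<open>the new polyline avoids the vertex points other than its ends and the points where two
    old polylines meet, and it meets every old segment in finitely many points\<close>
  define A where "A = ((\<Union>j\<in>S. \<Union>l\<in>S - {j}. polyline_image (pl j) \<inter> polyline_image (pl l)) \<union> V)
    - {pathstart (g i), pathfinish (g i)}"
  define OL where "OL = (\<Union>j\<in>S. polyline_segments (pl j))"
  have "finite (\<Union>j\<in>S. \<Union>l\<in>S - {j}. polyline_image (pl j) \<inter> polyline_image (pl l))"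
    using pl insert(1) unfolding generic_polylines_def by (intro finite_UN_I) auto
  then have fin_A: "finite A"
    using assms(2) unfolding A_def by simp
  have fin_OL: "finite OL"
    unfolding OL_def using insert(1) by (simp add: finite_polyline_segments)
  have g: "path (g i)" "pathstart (g i) \<in> V" "pathfinish (g i) \<in> V"
    using insert(4) by auto
  have ends: "pathstart (g i) \<notin> A" "pathfinish (g i) \<notin> A"
    unfolding A_def by auto
  obtain L where L: "L \<noteq> []" "hd L = pathstart (g i)" "last L = pathfinish (g i)"
    "polyline_image L \<inter> A = {}" "\<forall>(c, d)\<in>OL. finite (polyline_image L \<inter> closed_segment c d)"
    "\<forall>x\<in>polyline_image L. \<exists>y\<in>path_image (g i). dist x y < \<epsilon>"
    using exists_polyline_approximation[OF g(1) assms(3) fin_A fin_OL ends assms(4)] by blast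
  have "polyline_image L \<inter> V \<subseteq> {pathstart (g i), pathfinish (g i)}"
    using L(4) unfolding A_def by blast
  then have follows: "polyline_follows V (g i) \<epsilon> L"
    using L(1-3,6) unfolding polyline_follows_def by blast
  have meets_finite: "finite (polyline_image L \<inter> polyline_image (pl j))" if "j \<in> S" for j
    using L(5) that unfolding OL_def by (intro finite_Int_polyline_image) auto
  have triple_meets: "polyline_image L \<inter> polyline_image (pl j) \<inter> polyline_image (pl l) \<subseteq> V"
    if "j \<in> S" "l \<in> S" "j \<noteq> l" for j l
  proof
    fix x assume x: "x \<in> polyline_image L \<inter> polyline_image (pl j) \<inter> polyline_image (pl l)"
    then have "x \<notin> A" using L(4) by blast
    moreover have "x \<in> (\<Union>j\<in>S. \<Union>l\<in>S - {j}. polyline_image (pl j) \<inter> polyline_image (pl l))"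
      using x that by blast
    ultimately show "x \<in> V" using g(2,3) unfolding A_def by blast
  qed
  have "generic_polylines V g \<epsilon> (insert i S) (pl(i := L))"
    using meets_finite triple_meets by (intro generic_polylines_insert[OF pl insert(2) follows]) auto
  then show ?case by blast
qed

lemma exists_arc_in_polyline:
  fixes L :: "'a::euclidean_space list"
  assumes "polyline_follows V p \<epsilon> L" "pathstart p \<noteq> pathfinish p"
  obtains q where "arc q" "path_image q \<subseteq> polyline_image L"
    "pathstart q = pathstart p" "pathfinish q = pathfinish p"
proof -
  have "L \<noteq> []" "hd L = pathstart p" "last L = pathfinish p"
    using assms(1) unfolding polyline_follows_def by auto
  then show ?thesis
    using path_contains_arc[OF path_polyline _ _ assms(2), of L] that
    by (metis path_image_polyline pathfinish_polyline pathstart_polyline)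
qed

section \<open>Drawings along prescribed paths\<close>

lemma simple_graph_edgeE:
  assumes "simple_graph V E" "e \<in> E"
  obtains v w where "e = {v, w}" "v \<noteq> w" "v \<in> V" "w \<in> V"
proof -
  have "\<exists>v w. e = {v, w} \<and> v \<noteq> w \<and> v \<in> V \<and> w \<in> V"
    using assms unfolding simple_graph_def by simp
  then show ?thesis using that by (elim exE conjE)
qed

lemma simple_graph_edge_subset: "simple_graph V E \<Longrightarrow> e \<in> E \<Longrightarrow> e \<subseteq> V"
  by (auto elim: simple_graph_edgeE)

lemma simple_graph_finite_edges:
  assumes "simple_graph V E"
  shows "finite E"
proof (rule finite_subset)
  show "E \<subseteq> Pow V" using assms unfolding simple_graph_def by auto
  show "finite (Pow V)" using assms unfolding simple_graph_def by simp
qed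

definition edge_paths :: "'b set set \<Rightarrow> ('b \<Rightarrow> 'a::topological_space) \<Rightarrow> ('b set \<Rightarrow> real \<Rightarrow> 'a) \<Rightarrow> bool" where
  "edge_paths E P g \<longleftrightarrow>
     (\<forall>e\<in>E. \<exists>v w. e = {v, w} \<and> path (g e) \<and> pathstart (g e) = P v \<and> pathfinish (g e) = P w)"

lemma edge_pathsE:
  assumes "simple_graph V E" "edge_paths E P g" "e \<in> E"
  obtains v w where "e = {v, w}" "v \<noteq> w" "v \<in> V" "w \<in> V"
    "path (g e)" "pathstart (g e) = P v" "pathfinish (g e) = P w"
proof -
  have "\<exists>v w. e = {v, w} \<and> path (g e) \<and> pathstart (g e) = P v \<and> pathfinish (g e) = P w"
    using assms(2,3) unfolding edge_paths_def by (rule bspec)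
  then obtain v w where vw: "e = {v, w}" "path (g e)" "pathstart (g e) = P v" "pathfinish (g e) = P w"
    by (elim exE conjE)
  obtain v' w' where "e = {v', w'}" "v' \<noteq> w'" "v' \<in> V" "w' \<in> V"
    by (rule simple_graph_edgeE[OF assms(1,3)])
  then have "v \<noteq> w" "v \<in> V" "w \<in> V" using vw(1) by (auto simp: doubleton_eq_iff)
  then show ?thesis using that vw by simp
qed

lemma drawing_of_arcs_in_generic_polylines:
  fixes P :: "'b \<Rightarrow> complex" and g :: "'b set \<Rightarrow> real \<Rightarrow> complex"
  assumes "simple_graph VH EH" "inj_on P VH" "edge_paths EH P g"
    and pl: "generic_polylines (P ` VH) g \<epsilon> EH pl"
    and cv_arc: "\<And>e. e \<in> EH \<Longrightarrow> arc (cv e)"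
    and cv_sub: "\<And>e. e \<in> EH \<Longrightarrow> path_image (cv e) \<subseteq> polyline_image (pl e)"
    and cv_ends: "\<And>e. e \<in> EH \<Longrightarrow> pathstart (cv e) = pathstart (g e) \<and> pathfinish (cv e) = pathfinish (g e)"
  shows "drawing VH EH P cv"
proof -
  note ends = edge_pathsE[OF assms(1,3)]
  have vertex: "u \<in> e" if e: "e \<in> EH" and u: "u \<in> VH" "P u \<in> path_image (cv e)" for e u
  proof -
    obtain v w where vw: "e = {v, w}" "v \<noteq> w" "v \<in> VH" "w \<in> VH"
      "path (g e)" "pathstart (g e) = P v" "pathfinish (g e) = P w"
      by (rule ends[OF e])
    have "P u \<in> polyline_image (pl e) \<inter> P ` VH" using cv_sub[OF e] u by blast
    moreover have "polyline_image (pl e) \<inter> P ` VH \<subseteq> {pathstart (g e), pathfinish (g e)}"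
      using generic_polylines_follows[OF pl e] unfolding polyline_follows_def by (elim conjE)
    ultimately have "P u \<in> {P v, P w}" unfolding vw(6,7) by blast
    then have "u = v \<or> u = w" using inj_onD[OF assms(2)] vw(3,4) u(1) by auto
    then show ?thesis unfolding vw(1) by simp
  qed
  show ?thesis
    unfolding drawing_def
  proof (intro conjI ballI impI)
    show "inj_on P VH" by (rule assms(2))
  next
    fix e assume "e \<in> EH"
    then show "arc (cv e)" by (rule cv_arc)
  next
    fix e assume e: "e \<in> EH"
    then obtain v w where "e = {v, w}" "v \<noteq> w" "v \<in> VH" "w \<in> VH"
      "path (g e)" "pathstart (g e) = P v" "pathfinish (g e) = P w"
      by (rule ends)
    then show "\<exists>v w. e = {v, w} \<and> pathstart (cv e) = P v \<and> pathfinish (cv e) = P w"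
      using cv_ends[OF e] by auto
  next
    fix e u assume "e \<in> EH" "u \<in> VH" "P u \<in> path_image (cv e)"
    then show "u \<in> e" by (rule vertex)
  next
    fix e f h assume efh: "e \<in> EH" "f \<in> EH" "h \<in> EH" "e \<noteq> f \<and> e \<noteq> h \<and> f \<noteq> h"
    show "edge_interior P cv e \<inter> edge_interior P cv f \<inter> edge_interior P cv h = {}"
    proof (rule ccontr)
      assume "edge_interior P cv e \<inter> edge_interior P cv f \<inter> edge_interior P cv h \<noteq> {}"
      then obtain x where x: "x \<in> path_image (cv e)" "x \<notin> P ` e" "x \<in> path_image (cv f)"
          "x \<in> path_image (cv h)"
        unfolding edge_interior_def by blast
      then have "x \<in> polyline_image (pl e) \<inter> polyline_image (pl f) \<inter> polyline_image (pl h)"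
        using cv_sub[OF efh(1)] cv_sub[OF efh(2)] cv_sub[OF efh(3)] by blast
      then have "x \<in> P ` VH"
        using generic_polylines_triple[OF pl efh(1-3)] efh(4) by blast
      then obtain u where "u \<in> VH" "x = P u" by blast
      then show False using vertex[OF efh(1)] x(1,2) by blast
    qed
  qed
qed

lemma exists_drawing_near_paths:
  fixes P :: "'b \<Rightarrow> complex" and g :: "'b set \<Rightarrow> real \<Rightarrow> complex"
  assumes "simple_graph VH EH" "inj_on P VH" "\<epsilon> > 0"
    and "edge_paths EH P g"
  obtains cv where "drawing VH EH P cv"
    "\<forall>e\<in>EH. \<forall>x\<in>path_image (cv e). \<exists>y\<in>path_image (g e). dist x y < \<epsilon>"
proof -
  have fin: "finite VH" "finite EH"
    using assms(1) simple_graph_finite_edges[OF assms(1)] unfolding simple_graph_def by simp_all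
  note ends = edge_pathsE[OF assms(1,4)]
  have "\<forall>e\<in>EH. path (g e) \<and> pathstart (g e) \<in> P ` VH \<and> pathfinish (g e) \<in> P ` VH"
  proof
    fix e assume "e \<in> EH"
    then obtain v w where "e = {v, w}" "v \<noteq> w" "v \<in> VH" "w \<in> VH"
      "path (g e)" "pathstart (g e) = P v" "pathfinish (g e) = P w"
      by (rule ends)
    then show "path (g e) \<and> pathstart (g e) \<in> P ` VH \<and> pathfinish (g e) \<in> P ` VH" by simp
  qed
  then have "\<exists>pl. generic_polylines (P ` VH) g \<epsilon> EH pl"
    by (intro exists_generic_polylines[OF fin(2) finite_imageI[OF fin(1)] assms(3)]) simp_all
  then obtain pl where pl: "generic_polylines (P ` VH) g \<epsilon> EH pl" by (elim exE)
  note follows = generic_polylines_follows[OF pl]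
  have "\<forall>e\<in>EH. \<exists>q. arc q \<and> path_image q \<subseteq> polyline_image (pl e) \<and>
      pathstart q = pathstart (g e) \<and> pathfinish q = pathfinish (g e)"
  proof
    fix e assume e: "e \<in> EH"
    obtain v w where "e = {v, w}" "v \<noteq> w" "v \<in> VH" "w \<in> VH"
      "path (g e)" "pathstart (g e) = P v" "pathfinish (g e) = P w"
      by (rule ends[OF e])
    then have "pathstart (g e) \<noteq> pathfinish (g e)" using assms(2) by (auto dest: inj_onD)
    then obtain q where "arc q" "path_image q \<subseteq> polyline_image (pl e)"
      "pathstart q = pathstart (g e)" "pathfinish q = pathfinish (g e)"
      by (rule exists_arc_in_polyline[OF follows[OF e]])
    then show "\<exists>q. arc q \<and> path_image q \<subseteq> polyline_image (pl e) \<and>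
      pathstart q = pathstart (g e) \<and> pathfinish q = pathfinish (g e)" by auto
  qed
  then obtain cv where cv: "\<forall>e\<in>EH. arc (cv e) \<and> path_image (cv e) \<subseteq> polyline_image (pl e) \<and>
      pathstart (cv e) = pathstart (g e) \<and> pathfinish (cv e) = pathfinish (g e)"
    by (rule bchoice[THEN exE])
  then have cv_sub: "\<And>e. e \<in> EH \<Longrightarrow> path_image (cv e) \<subseteq> polyline_image (pl e)" by simp
  have "drawing VH EH P cv"
    using cv by (intro drawing_of_arcs_in_generic_polylines[OF assms(1,2,4) pl]) simp_all
  moreover have "\<exists>y\<in>path_image (g e). dist x y < \<epsilon>" if "e \<in> EH" "x \<in> path_image (cv e)" for e x
  proof -
    have "\<forall>x\<in>polyline_image (pl e). \<exists>y\<in>path_image (g e). dist x y < \<epsilon>"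
      using follows[OF that(1)] unfolding polyline_follows_def by (elim conjE)
    then show ?thesis using cv_sub[OF that(1)] that(2) by blast
  qed
  ultimately show ?thesis using that by blast
qed

lemma finite_compact_sets_separated:
  fixes K :: "'i \<Rightarrow> 'a::metric_space set"
  assumes "finite I" "\<forall>i\<in>I. compact (K i)"
  obtains d where "d > 0" "\<forall>i\<in>I. \<forall>j\<in>I. K i \<inter> K j = {} \<longrightarrow> (\<forall>x\<in>K i. \<forall>y\<in>K j. d \<le> dist x y)"
proof -
  define D where "D = (\<lambda>(i, j). setdist (K i) (K j)) `
    {(i, j) \<in> I \<times> I. K i \<noteq> {} \<and> K j \<noteq> {} \<and> K i \<inter> K j = {}}"
  define d where "d = Min (insert 1 D)"
  have "finite {(i, j) \<in> I \<times> I. K i \<noteq> {} \<and> K j \<noteq> {} \<and> K i \<inter> K j = {}}"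
    by (rule finite_subset[of _ "I \<times> I"]) (use assms(1) in auto)
  then have "finite D" unfolding D_def by simp
  moreover have "setdist (K i) (K j) > 0"
    if "i \<in> I" "j \<in> I" "K i \<noteq> {}" "K j \<noteq> {}" "K i \<inter> K j = {}" for i j
    using that assms(2) by (simp add: setdist_gt_0_compact_closed compact_imp_closed)
  then have "\<forall>t\<in>D. t > 0" unfolding D_def by auto
  ultimately have "d > 0" unfolding d_def by simp
  moreover have "d \<le> dist x y"
    if "i \<in> I" "j \<in> I" "K i \<inter> K j = {}" "x \<in> K i" "y \<in> K j" for i j x y
  proof -
    have "setdist (K i) (K j) \<in> D"
      unfolding D_def using that by (intro image_eqI[of _ _ "(i, j)"]) auto
    then have "d \<le> setdist (K i) (K j)" unfolding d_def using \<open>finite D\<close> by simp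
    also have "\<dots> \<le> dist x y" using that(4,5) by (rule setdist_le_dist)
    finally show ?thesis .
  qed
  ultimately show ?thesis using that by blast
qed

lemma exists_drawing_along_paths:
  fixes P :: "'b \<Rightarrow> complex" and g :: "'b set \<Rightarrow> real \<Rightarrow> complex"
  assumes "simple_graph VH EH" "inj_on P VH" "edge_paths EH P g"
  obtains cv where "drawing VH EH P cv"
    "\<forall>e\<in>EH. \<forall>f\<in>EH. path_image (cv e) \<inter> path_image (cv f) \<noteq> {} \<longrightarrow>
       path_image (g e) \<inter> path_image (g f) \<noteq> {}"
proof -
  have "\<forall>e\<in>EH. compact (path_image (g e))"
  proof
    fix e assume "e \<in> EH"
    then obtain v w where "e = {v, w}" "v \<noteq> w" "v \<in> VH" "w \<in> VH"
      "path (g e)" "pathstart (g e) = P v" "pathfinish (g e) = P w"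
      by (rule edge_pathsE[OF assms(1,3)])
    then show "compact (path_image (g e))" by (simp add: compact_path_image)
  qed
  then obtain d where d: "d > 0" "\<forall>e\<in>EH. \<forall>f\<in>EH. path_image (g e) \<inter> path_image (g f) = {} \<longrightarrow>
      (\<forall>y\<in>path_image (g e). \<forall>y'\<in>path_image (g f). d \<le> dist y y')"
    by (rule finite_compact_sets_separated[OF simple_graph_finite_edges[OF assms(1)]])
  \<comment> \<open>edges drawn within d/2 of their paths can only meet where their paths meet\<close>
  obtain cv where cv: "drawing VH EH P cv"
    "\<forall>e\<in>EH. \<forall>x\<in>path_image (cv e). \<exists>y\<in>path_image (g e). dist x y < d/2"
    by (rule exists_drawing_near_paths[OF assms(1,2) half_gt_zero[OF d(1)] assms(3)])
  have "path_image (g e) \<inter> path_image (g f) \<noteq> {}"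
    if ef: "e \<in> EH" "f \<in> EH" and x: "x \<in> path_image (cv e)" "x \<in> path_image (cv f)" for e f x
  proof -
    obtain y where y: "y \<in> path_image (g e)" "dist x y < d/2"
      using cv(2) ef(1) x(1) by blast
    obtain y' where y': "y' \<in> path_image (g f)" "dist x y' < d/2"
      using cv(2) ef(2) x(2) by blast
    have "dist y y' < d"
      using y(2) y'(2) by (intro dist_triangle_half_l[of y x d y']) (simp_all add: dist_commute)
    show ?thesis
    proof
      assume "path_image (g e) \<inter> path_image (g f) = {}"
      then have "d \<le> dist y y'" using d(2) ef y(1) y'(1) by blast
      then show False using \<open>dist y y' < d\<close> by simp
    qed
  qed
  then show ?thesis using that cv(1) by blast
qed

fun walk_edges :: "'a list \<Rightarrow> 'a set set" where
  "walk_edges (x # y # xs) = insert {x, y} (walk_edges (y # xs))"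
| "walk_edges _ = {}"

lemma walk_edges_append:
  "xs \<noteq> [] \<Longrightarrow> ys \<noteq> [] \<Longrightarrow>
    walk_edges (xs @ ys) = insert {last xs, hd ys} (walk_edges xs \<union> walk_edges ys)"
proof (induction xs rule: walk_edges.induct)
  case ("2_2" x)
  then show ?case by (cases ys) auto
qed auto

lemma walk_edges_rev: "walk_edges (rev xs) = walk_edges xs"
proof (induction xs rule: walk_edges.induct)
  case (1 x y xs)
  have "walk_edges (rev (x # y # xs)) = walk_edges (rev (y # xs) @ [x])" by simp
  also have "\<dots> = insert {y, x} (walk_edges (rev (y # xs)))"
    by (subst walk_edges_append) simp_all
  finally show ?case using 1 by (simp add: insert_commute)
qed simp_all

lemma walk_edges_subset_set: "a \<in> walk_edges xs \<Longrightarrow> a \<subseteq> set xs"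
  by (induction xs rule: walk_edges.induct) auto

lemma finite_walk_edges: "finite (walk_edges xs)"
  by (induction xs rule: walk_edges.induct) auto

lemma card_walk_edges_le: "card (walk_edges xs) \<le> length xs - 1"
  by (induction xs rule: walk_edges.induct) (auto simp: card_insert_if finite_walk_edges)

lemma walk_edges_nth:
  "a \<in> walk_edges xs \<Longrightarrow> \<exists>i. Suc i < length xs \<and> a = {xs ! i, xs ! Suc i}"
proof (induction xs rule: walk_edges.induct)
  case (1 x y xs)
  show ?case
  proof (cases "a = {x, y}")
    case False
    then obtain i where "Suc i < length (y # xs)" "a = {(y # xs) ! i, (y # xs) ! Suc i}"
      using 1 by auto
    then show ?thesis by (intro exI[of _ "Suc i"]) simp
  qed force
qed simp_all

lemma walk_edges_subset: "walk V E xs \<Longrightarrow> walk_edges xs \<subseteq> E"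
  unfolding walk_def by (auto dest: walk_edges_nth)

lemma drawing_edge_arc: "drawing V E pos cv \<Longrightarrow> e \<in> E \<Longrightarrow> arc (cv e)"
  unfolding drawing_def by blast

lemma drawing_edge_ends:
  assumes "drawing V E pos cv" "e \<in> E"
  shows "\<exists>v w. e = {v, w} \<and> pathstart (cv e) = pos v \<and> pathfinish (cv e) = pos w"
proof -
  have "\<forall>e\<in>E. arc (cv e) \<and>
      (\<exists>v w. e = {v, w} \<and> pathstart (cv e) = pos v \<and> pathfinish (cv e) = pos w) \<and>
      (\<forall>u\<in>V. pos u \<in> path_image (cv e) \<longrightarrow> u \<in> e)"
    using assms(1) unfolding drawing_def by (elim conjE)
  then show ?thesis using assms(2) by simp
qed

definition edge_curve_from :: "('a \<Rightarrow> complex) \<Rightarrow> ('a set \<Rightarrow> real \<Rightarrow> complex) \<Rightarrow> 'a \<Rightarrow> 'a \<Rightarrow> real \<Rightarrow> complex" where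
  "edge_curve_from pos cv x y =
     (if pathstart (cv {x, y}) = pos x then cv {x, y} else reversepath (cv {x, y}))"

lemma path_edge_curve_from:
  assumes "drawing V E pos cv" "simple_graph V E" "{x, y} \<in> E"
  shows "path (edge_curve_from pos cv x y)" "pathstart (edge_curve_from pos cv x y) = pos x"
    "pathfinish (edge_curve_from pos cv x y) = pos y"
    "path_image (edge_curve_from pos cv x y) = path_image (cv {x, y})"
proof -
  obtain v w where vw: "{x, y} = {v, w}" "pathstart (cv {x, y}) = pos v" "pathfinish (cv {x, y}) = pos w"
    using drawing_edge_ends[OF assms(1,3)] by (elim exE conjE)
  have "x \<noteq> y" "x \<in> V" "y \<in> V"
    using simple_graph_edgeE[OF assms(2,3)] by (metis doubleton_eq_iff)+
  moreover have "inj_on pos V" using assms(1) unfolding drawing_def by blast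
  ultimately have "pathstart (cv {x, y}) = pos x \<longleftrightarrow> v = x"
    using vw(1,2) by (auto simp: doubleton_eq_iff dest: inj_onD)
  then have "pathstart (edge_curve_from pos cv x y) = pos x \<and> pathfinish (edge_curve_from pos cv x y) = pos y"
    using vw \<open>x \<noteq> y\<close> by (auto simp: edge_curve_from_def doubleton_eq_iff)
  moreover have "path (cv {x, y})" using drawing_edge_arc[OF assms(1,3)] by (rule arc_imp_path)
  ultimately show "path (edge_curve_from pos cv x y)" "pathstart (edge_curve_from pos cv x y) = pos x"
    "pathfinish (edge_curve_from pos cv x y) = pos y"
    "path_image (edge_curve_from pos cv x y) = path_image (cv {x, y})"
    by (simp_all add: edge_curve_from_def)
qed

fun walk_curve :: "('a \<Rightarrow> complex) \<Rightarrow> ('a set \<Rightarrow> real \<Rightarrow> complex) \<Rightarrow> 'a list \<Rightarrow> real \<Rightarrow> complex" where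
  "walk_curve pos cv [] = linepath 0 0"
| "walk_curve pos cv [x] = linepath (pos x) (pos x)"
| "walk_curve pos cv (x # y # xs) = edge_curve_from pos cv x y +++ walk_curve pos cv (y # xs)"

lemma walk_curve_along_edges:
  assumes "drawing V E pos cv" "simple_graph V E"
  shows "walk_edges xs \<subseteq> E \<Longrightarrow> xs \<noteq> [] \<Longrightarrow>
    path (walk_curve pos cv xs) \<and> pathstart (walk_curve pos cv xs) = pos (hd xs) \<and>
    pathfinish (walk_curve pos cv xs) = pos (last xs) \<and>
    (2 \<le> length xs \<longrightarrow> path_image (walk_curve pos cv xs) \<subseteq> (\<Union>a\<in>walk_edges xs. path_image (cv a)))"
proof (induction xs rule: walk_edges.induct)
  case (1 x y xs)
  then have xy: "{x, y} \<in> E" by simp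
  note edge = path_edge_curve_from[OF assms xy]
  have IH: "path (walk_curve pos cv (y # xs)) \<and> pathstart (walk_curve pos cv (y # xs)) = pos y \<and>
      pathfinish (walk_curve pos cv (y # xs)) = pos (last (y # xs)) \<and>
      (2 \<le> length (y # xs) \<longrightarrow>
        path_image (walk_curve pos cv (y # xs)) \<subseteq> (\<Union>a\<in>walk_edges (y # xs). path_image (cv a)))"
    using 1 by simp
  have "path_image (walk_curve pos cv (y # xs)) \<subseteq> (\<Union>a\<in>walk_edges (x # y # xs). path_image (cv a))"
  proof (cases xs)
    case Nil
    have "pos y \<in> path_image (cv {x, y})" using edge(3,4) by (metis pathfinish_in_path_image)
    then show ?thesis using Nil by simp
  next
    case (Cons z zs)
    then show ?thesis using IH by auto
  qed
  then show ?case using edge IH by (simp add: path_image_join)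
qed (simp_all add: path_const)

lemma exists_drawing_along_walks:
  assumes "drawing VG EG pos cv" "simple_graph VG EG" "simple_graph VH EH" "inj_on (pos \<circ> c) VH"
    and "\<forall>e\<in>EH. \<exists>v w. e = {v, w} \<and> hd (R e) = c v \<and> last (R e) = c w \<and> 2 \<le> length (R e)"
    and "\<forall>e\<in>EH. walk_edges (R e) \<subseteq> EG"
  obtains cvH where "drawing VH EH (pos \<circ> c) cvH"
    "\<forall>e\<in>EH. \<forall>f\<in>EH. path_image (cvH e) \<inter> path_image (cvH f) \<noteq> {} \<longrightarrow>
       (\<exists>a\<in>walk_edges (R e). \<exists>b\<in>walk_edges (R f). path_image (cv a) \<inter> path_image (cv b) \<noteq> {})"
proof -
  define g where "g e = walk_curve pos cv (R e)" for e
  have curve: "path (g e) \<and> pathstart (g e) = pos (hd (R e)) \<and> pathfinish (g e) = pos (last (R e)) \<and>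
      path_image (g e) \<subseteq> (\<Union>a\<in>walk_edges (R e). path_image (cv a))" if e: "e \<in> EH" for e
  proof -
    obtain v w where "e = {v, w}" "hd (R e) = c v" "last (R e) = c w" "2 \<le> length (R e)"
      using bspec[OF assms(5) e] by (elim exE conjE)
    moreover have "R e \<noteq> []" using \<open>2 \<le> length (R e)\<close> by auto
    ultimately show ?thesis
      using walk_curve_along_edges[OF assms(1,2) bspec[OF assms(6) e]] unfolding g_def by simp
  qed
  have "edge_paths EH (pos \<circ> c) g"
    unfolding edge_paths_def
  proof
    fix e assume e: "e \<in> EH"
    obtain v w where vw: "e = {v, w}" "hd (R e) = c v" "last (R e) = c w"
      using bspec[OF assms(5) e] by (elim exE conjE)
    show "\<exists>v w. e = {v, w} \<and> path (g e) \<and> pathstart (g e) = (pos \<circ> c) v \<and> pathfinish (g e) = (pos \<circ> c) w"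
      using curve[OF e] vw by (intro exI[of _ v] exI[of _ w]) simp
  qed
  then obtain cvH where cvH: "drawing VH EH (pos \<circ> c) cvH"
    "\<forall>e\<in>EH. \<forall>f\<in>EH. path_image (cvH e) \<inter> path_image (cvH f) \<noteq> {} \<longrightarrow>
       path_image (g e) \<inter> path_image (g f) \<noteq> {}"
    by (rule exists_drawing_along_paths[OF assms(3,4)])
  have "\<exists>a\<in>walk_edges (R e). \<exists>b\<in>walk_edges (R f). path_image (cv a) \<inter> path_image (cv b) \<noteq> {}"
    if ef: "e \<in> EH" "f \<in> EH" and meet: "path_image (cvH e) \<inter> path_image (cvH f) \<noteq> {}" for e f
  proof -
    obtain x where "x \<in> path_image (g e)" "x \<in> path_image (g f)" using cvH(2) ef meet by blast
    then show ?thesis using curve[OF ef(1)] curve[OF ef(2)] by blast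
  qed
  then show ?thesis using that cvH(1) by blast
qed

section \<open>Routing the edges of a shallow minor\<close>

definition radius_centre :: "'a set \<Rightarrow> 'a set set \<Rightarrow> nat \<Rightarrow> 'a \<Rightarrow> bool" where
  "radius_centre Vs Es r c \<longleftrightarrow> c \<in> Vs \<and>
     (\<forall>x\<in>Vs. \<exists>xs. walk Vs Es xs \<and> hd xs = c \<and> last xs = x \<and> length xs \<le> r + 1)"

lemma shallow_model_centres:
  assumes "shallow_model r VH EH VG EG mu"
  obtains c where "\<forall>u\<in>VH. radius_centre (fst (mu u)) (snd (mu u)) r (c u)"
proof -
  have "\<forall>u\<in>VH. radius_le (fst (mu u)) (snd (mu u)) r"
    using assms unfolding shallow_model_def by blast
  then have "\<forall>u\<in>VH. \<exists>c. radius_centre (fst (mu u)) (snd (mu u)) r c"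
    unfolding radius_le_def radius_centre_def by blast
  then show ?thesis using that by (rule bchoice[THEN exE])
qed

lemma shallow_model_route:
  assumes model: "shallow_model r VH EH VG EG mu"
    and centres: "\<forall>u\<in>VH. radius_centre (fst (mu u)) (snd (mu u)) r (c u)"
    and vw: "{v, w} \<in> EH" "v \<in> VH" "w \<in> VH"
  obtains zs where "hd zs = c v" "last zs = c w" "2 \<le> length zs" "length zs \<le> 2 * r + 2"
    "walk_edges zs \<subseteq> EG" "set zs \<subseteq> fst (mu v) \<union> fst (mu w)"
proof -
  have "\<forall>v w. {v, w} \<in> EH \<longrightarrow> (\<exists>x\<in>fst (mu v). \<exists>y\<in>fst (mu w). {x, y} \<in> EG)"
    using model unfolding shallow_model_def by (elim conjE)
  then have "\<exists>x\<in>fst (mu v). \<exists>y\<in>fst (mu w). {x, y} \<in> EG" using vw(1) by simp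
  then obtain x y where xy: "x \<in> fst (mu v)" "y \<in> fst (mu w)" "{x, y} \<in> EG" by (elim bexE)
  have walk_to: "\<exists>xs. walk (fst (mu u)) (snd (mu u)) xs \<and> hd xs = c u \<and> last xs = z \<and> length xs \<le> r + 1"
    if "u \<in> VH" "z \<in> fst (mu u)" for u z
    using bspec[OF centres that(1)] that(2) unfolding radius_centre_def by simp
  obtain xs where xs: "walk (fst (mu v)) (snd (mu v)) xs" "hd xs = c v" "last xs = x" "length xs \<le> r + 1"
    using walk_to[OF vw(2) xy(1)] by (elim exE conjE)
  obtain ys where ys: "walk (fst (mu w)) (snd (mu w)) ys" "hd ys = c w" "last ys = y" "length ys \<le> r + 1"
    using walk_to[OF vw(3) xy(2)] by (elim exE conjE)
  have "\<forall>u\<in>VH. subgraph (fst (mu u)) (snd (mu u)) VG EG \<and> fst (mu u) \<noteq> {} \<and>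
      connected_graph (fst (mu u)) (snd (mu u)) \<and> radius_le (fst (mu u)) (snd (mu u)) r"
    using model unfolding shallow_model_def by (elim conjE)
  then have sub: "snd (mu u) \<subseteq> EG" if "u \<in> VH" for u
    using that unfolding subgraph_def by simp
  have ne: "xs \<noteq> []" "ys \<noteq> []" using xs(1) ys(1) by (simp_all add: walk_def)
  \<comment> \<open>walk inside the branch set of v to x, cross the edge xy, walk back inside the branch set of w\<close>
  define zs where "zs = xs @ rev ys"
  have "hd zs = c v" "last zs = c w"
    using ne xs(2) ys(2) by (simp_all add: zs_def last_rev)
  moreover have "length zs = length xs + length ys" "0 < length xs" "0 < length ys"
    using ne by (simp_all add: zs_def)
  then have "2 \<le> length zs" "length zs \<le> 2 * r + 2"
    using xs(4) ys(4) by linarith+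
  moreover have "walk_edges zs = insert {x, y} (walk_edges xs \<union> walk_edges ys)"
    unfolding zs_def using ne xs(3) ys(3) by (simp add: walk_edges_append walk_edges_rev hd_rev)
  then have "walk_edges zs \<subseteq> EG"
    using xy(3) walk_edges_subset[OF xs(1)] walk_edges_subset[OF ys(1)] sub[OF vw(2)] sub[OF vw(3)]
    by auto
  moreover have "set xs \<subseteq> fst (mu v)" "set ys \<subseteq> fst (mu w)"
    using xs(1) ys(1) by (simp_all add: walk_def)
  then have "set zs \<subseteq> fst (mu v) \<union> fst (mu w)" by (auto simp: zs_def)
  ultimately show ?thesis by (rule that)
qed

lemma shallow_model_routes:
  assumes "shallow_model r VH EH VG EG mu" "simple_graph VH EH"
  obtains c R where "\<forall>u\<in>VH. c u \<in> fst (mu u)"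
    "\<forall>e\<in>EH. \<exists>v w. e = {v, w} \<and> hd (R e) = c v \<and> last (R e) = c w \<and> 2 \<le> length (R e)"
    "\<forall>e\<in>EH. walk_edges (R e) \<subseteq> EG \<and> card (walk_edges (R e)) \<le> 2 * r + 1 \<and>
       (\<forall>a\<in>walk_edges (R e). a \<subseteq> (\<Union>u\<in>e. fst (mu u)))"
proof -
  obtain c where c: "\<forall>u\<in>VH. radius_centre (fst (mu u)) (snd (mu u)) r (c u)"
    by (rule shallow_model_centres[OF assms(1)])
  have "\<forall>e\<in>EH. \<exists>zs. (\<exists>v w. e = {v, w} \<and> hd zs = c v \<and> last zs = c w \<and> 2 \<le> length zs) \<and>
     walk_edges zs \<subseteq> EG \<and> card (walk_edges zs) \<le> 2 * r + 1 \<and> (\<forall>a\<in>walk_edges zs. a \<subseteq> (\<Union>u\<in>e. fst (mu u)))"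
  proof
    fix e assume e: "e \<in> EH"
    then obtain v w where vw: "e = {v, w}" "v \<noteq> w" "v \<in> VH" "w \<in> VH"
      by (rule simple_graph_edgeE[OF assms(2)])
    obtain zs where zs: "hd zs = c v" "last zs = c w" "2 \<le> length zs" "length zs \<le> 2 * r + 2"
      "walk_edges zs \<subseteq> EG" "set zs \<subseteq> fst (mu v) \<union> fst (mu w)"
      using shallow_model_route[OF assms(1) c _ vw(3,4)] e vw(1) by blast
    have "card (walk_edges zs) \<le> 2 * r + 1" using card_walk_edges_le[of zs] zs(4) by linarith
    moreover have "\<forall>a\<in>walk_edges zs. a \<subseteq> (\<Union>u\<in>e. fst (mu u))"
      using walk_edges_subset_set zs(6) vw(1) by fastforce
    ultimately show "\<exists>zs. (\<exists>v w. e = {v, w} \<and> hd zs = c v \<and> last zs = c w \<and> 2 \<le> length zs) \<and>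
     walk_edges zs \<subseteq> EG \<and> card (walk_edges zs) \<le> 2 * r + 1 \<and> (\<forall>a\<in>walk_edges zs. a \<subseteq> (\<Union>u\<in>e. fst (mu u)))"
      using zs(1-3,5) vw(1) by blast
  qed
  then obtain R where "\<forall>e\<in>EH. (\<exists>v w. e = {v, w} \<and> hd (R e) = c v \<and> last (R e) = c w \<and> 2 \<le> length (R e)) \<and>
     walk_edges (R e) \<subseteq> EG \<and> card (walk_edges (R e)) \<le> 2 * r + 1 \<and>
     (\<forall>a\<in>walk_edges (R e). a \<subseteq> (\<Union>u\<in>e. fst (mu u)))"
    by (rule bchoice[THEN exE])
  then have R: "\<forall>e\<in>EH. \<exists>v w. e = {v, w} \<and> hd (R e) = c v \<and> last (R e) = c w \<and> 2 \<le> length (R e)"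
    "\<forall>e\<in>EH. walk_edges (R e) \<subseteq> EG \<and> card (walk_edges (R e)) \<le> 2 * r + 1 \<and>
       (\<forall>a\<in>walk_edges (R e). a \<subseteq> (\<Union>u\<in>e. fst (mu u)))"
    by (simp_all add: ball_conj_distrib)
  have "\<forall>u\<in>VH. c u \<in> fst (mu u)" using c unfolding radius_centre_def by simp
  then show ?thesis using R by (rule that)
qed

lemma disjoint_family_on_shallow_model:
  "shallow_model r VH EH VG EG mu \<Longrightarrow> disjoint_family_on (\<lambda>u. fst (mu u)) VH"
  unfolding shallow_model_def disjoint_family_on_def by (elim conjE)

lemma inj_on_shallow_model_centres:
  assumes "shallow_model r VH EH VG EG mu" "inj_on pos VG" "\<forall>u\<in>VH. c u \<in> fst (mu u)"
  shows "inj_on (pos \<circ> c) VH"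
proof (rule comp_inj_on)
  show "inj_on c VH"
  proof (rule inj_onI)
    fix u u' assume "u \<in> VH" "u' \<in> VH" "c u = c u'"
    then have "fst (mu u) \<inter> fst (mu u') \<noteq> {}" using assms(3) by force
    then show "u = u'"
      using disjoint_family_on_shallow_model[OF assms(1)] \<open>u \<in> VH\<close> \<open>u' \<in> VH\<close>
      unfolding disjoint_family_on_def by blast
  qed
  have "\<forall>u\<in>VH. subgraph (fst (mu u)) (snd (mu u)) VG EG \<and> fst (mu u) \<noteq> {} \<and>
      connected_graph (fst (mu u)) (snd (mu u)) \<and> radius_le (fst (mu u)) (snd (mu u)) r"
    using assms(1) unfolding shallow_model_def by (elim conjE)
  then have "c u \<in> VG" if "u \<in> VH" for u
    using assms(3) that unfolding subgraph_def by blast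
  then show "inj_on pos (c ` VH)" using inj_on_subset[OF assms(2)] by blast
qed

section \<open>Projecting bearings and covers\<close>

lemma disjoint_family_on_UN_disjoint:
  assumes "disjoint_family_on Vm V" "e \<subseteq> V" "f \<subseteq> V" "e \<inter> f = {}"
  shows "(\<Union>u\<in>e. Vm u) \<inter> (\<Union>u\<in>f. Vm u) = {}"
proof (rule equals0I)
  fix z assume "z \<in> (\<Union>u\<in>e. Vm u) \<inter> (\<Union>u\<in>f. Vm u)"
  then obtain u u' where u: "u \<in> e" "u' \<in> f" "z \<in> Vm u" "z \<in> Vm u'" by blast
  then have "u \<noteq> u'" "u \<in> V" "u' \<in> V" using assms(2-4) by auto
  then have "Vm u \<inter> Vm u' = {}" using assms(1) unfolding disjoint_family_on_def by simp
  then show False using u(3,4) by blast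
qed

lemma card_branch_sets_meeting_le:
  assumes "disjoint_family_on Vm U" "finite Z"
  shows "card {u \<in> U. Vm u \<inter> Z \<noteq> {}} \<le> card Z"
proof -
  define h where "h u = (SOME z. z \<in> Vm u \<inter> Z)" for u
  have h: "h u \<in> Vm u \<inter> Z" if "u \<in> {u \<in> U. Vm u \<inter> Z \<noteq> {}}" for u
  proof -
    have "\<exists>z. z \<in> Vm u \<inter> Z" using that by blast
    then show ?thesis unfolding h_def by (rule someI_ex)
  qed
  have "inj_on h {u \<in> U. Vm u \<inter> Z \<noteq> {}}"
  proof (rule inj_onI)
    fix u u' assume u: "u \<in> {u \<in> U. Vm u \<inter> Z \<noteq> {}}" "u' \<in> {u \<in> U. Vm u \<inter> Z \<noteq> {}}"
      and "h u = h u'"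
    then have "h u \<in> Vm u \<inter> Vm u'" using h[OF u(1)] h[OF u(2)] by simp
    then show "u = u'" using assms(1) u unfolding disjoint_family_on_def by blast
  qed
  moreover have "h ` {u \<in> U. Vm u \<inter> Z \<noteq> {}} \<subseteq> Z" using h by blast
  ultimately show ?thesis using assms(2) by (rule card_inj_on_le)
qed

lemma crossing_pairs_doubleton_iff:
  "{e, f} \<in> crossing_pairs E pos cv \<longleftrightarrow>
    e \<in> E \<and> f \<in> E \<and> e \<inter> f = {} \<and> path_image (cv e) \<inter> path_image (cv f) \<noteq> {}"
proof
  assume "{e, f} \<in> crossing_pairs E pos cv"
  then obtain e' f' where "{e, f} = {e', f'}" "e' \<in> E" "f' \<in> E" "e' \<inter> f' = {}"
    "path_image (cv e') \<inter> path_image (cv f') \<noteq> {}"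
    unfolding crossing_pairs_def mem_Collect_eq by (elim exE conjE)
  then show "e \<in> E \<and> f \<in> E \<and> e \<inter> f = {} \<and> path_image (cv e) \<inter> path_image (cv f) \<noteq> {}"
    by (auto simp: doubleton_eq_iff)
next
  assume "e \<in> E \<and> f \<in> E \<and> e \<inter> f = {} \<and> path_image (cv e) \<inter> path_image (cv f) \<noteq> {}"
  then show "{e, f} \<in> crossing_pairs E pos cv"
    unfolding crossing_pairs_def by auto
qed

definition projected_bearing ::
  "'b set set \<Rightarrow> ('b set \<Rightarrow> real \<Rightarrow> complex) \<Rightarrow> ('b set \<Rightarrow> 'a set set) \<Rightarrow> ('a set \<times> 'a set) set
    \<Rightarrow> ('b set \<times> 'b set) set" where
  "projected_bearing EH cvH A B = {(e, f). e \<in> EH \<and> f \<in> EH \<and> e \<inter> f = {} \<and>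
     path_image (cvH e) \<inter> path_image (cvH f) \<noteq> {} \<and> (\<exists>a\<in>A e. \<exists>b\<in>A f. (a, b) \<in> B)}"

lemma bearing_projected_bearing:
  assumes "bearing EG pos cv B" "simple_graph VH EH" "disjoint_family_on Vm VH"
    and "\<forall>e\<in>EH. A e \<subseteq> EG \<and> (\<forall>a\<in>A e. a \<subseteq> (\<Union>u\<in>e. Vm u))"
    and "\<forall>e\<in>EH. \<forall>f\<in>EH. e \<inter> f = {} \<longrightarrow> path_image (cvH e) \<inter> path_image (cvH f) \<noteq> {} \<longrightarrow>
       (\<exists>a\<in>A e. \<exists>b\<in>A f. path_image (cv a) \<inter> path_image (cv b) \<noteq> {})"
  shows "bearing EH P cvH (projected_bearing EH cvH A B)"
  unfolding bearing_def
proof (intro conjI allI impI ballI)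
  fix p assume "p \<in> projected_bearing EH cvH A B"
  then show "case p of (e, f) \<Rightarrow> {e, f} \<in> crossing_pairs EH P cvH"
    by (auto simp: projected_bearing_def crossing_pairs_doubleton_iff)
next
  fix e f assume "{e, f} \<in> crossing_pairs EH P cvH"
  then have ef: "e \<in> EH" "f \<in> EH" "e \<inter> f = {}" "path_image (cvH e) \<inter> path_image (cvH f) \<noteq> {}"
    by (simp_all add: crossing_pairs_doubleton_iff)
  then obtain a b where ab: "a \<in> A e" "b \<in> A f" "path_image (cv a) \<inter> path_image (cv b) \<noteq> {}"
    using assms(5) by blast
  have "(\<Union>u\<in>e. Vm u) \<inter> (\<Union>u\<in>f. Vm u) = {}"
    using assms(3) simple_graph_edge_subset[OF assms(2) ef(1)] simple_graph_edge_subset[OF assms(2) ef(2)] ef(3)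
    by (rule disjoint_family_on_UN_disjoint)
  moreover have "a \<subseteq> (\<Union>u\<in>e. Vm u)" "b \<subseteq> (\<Union>u\<in>f. Vm u)"
    using bspec[OF assms(4) ef(1)] bspec[OF assms(4) ef(2)] ab(1,2) by simp_all
  ultimately have "a \<inter> b = {}" by auto
  then have "{a, b} \<in> crossing_pairs EG pos cv"
    using assms(4) ef(1,2) ab by (auto simp: crossing_pairs_doubleton_iff)
  moreover have "\<forall>a b. {a, b} \<in> crossing_pairs EG pos cv \<longrightarrow> (a, b) \<in> B \<or> (b, a) \<in> B"
    using assms(1) unfolding bearing_def by (elim conjE)
  ultimately have "(a, b) \<in> B \<or> (b, a) \<in> B" by blast
  then show "(e, f) \<in> projected_bearing EH cvH A B \<or> (f, e) \<in> projected_bearing EH cvH A B"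
    using ef ab(1,2) by (auto simp: projected_bearing_def Int_commute)
qed

lemma B_cover_projected_bearing:
  assumes "simple_graph VH EH" "\<forall>f\<in>EH. \<forall>b\<in>A f. b \<subseteq> (\<Union>u\<in>f. Vm u)"
    and "\<forall>a\<in>A e. B_cover B a (C a)"
  shows "B_cover (projected_bearing EH cvH A B) e {u \<in> VH - e. Vm u \<inter> (\<Union>a\<in>A e. C a) \<noteq> {}}"
  unfolding B_cover_def
proof (intro allI impI)
  fix f assume "(e, f) \<in> projected_bearing EH cvH A B"
  then obtain a b where ab: "f \<in> EH" "e \<inter> f = {}" "a \<in> A e" "b \<in> A f" "(a, b) \<in> B"
    unfolding projected_bearing_def by blast
  then obtain z where z: "z \<in> b" "z \<in> C a"
    using assms(3) unfolding B_cover_def by blast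
  then obtain u where u: "u \<in> f" "z \<in> Vm u"
    using assms(2) ab(1,4) by blast
  then have "u \<in> VH - e" using simple_graph_edge_subset[OF assms(1) ab(1)] ab(2) by blast
  then show "f \<inter> {u \<in> VH - e. Vm u \<inter> (\<Union>a\<in>A e. C a) \<noteq> {}} \<noteq> {}"
    using u z(2) ab(3) by blast
qed

lemma gap_cover_planar_drawing_projection:
  assumes "gap_cover_planar_drawing k VG EG pos cv" "simple_graph VH EH" "drawing VH EH P cvH"
    and "disjoint_family_on Vm VH"
    and "\<forall>e\<in>EH. A e \<subseteq> EG \<and> card (A e) \<le> m \<and> (\<forall>a\<in>A e. a \<subseteq> (\<Union>u\<in>e. Vm u))"
    and "\<forall>e\<in>EH. \<forall>f\<in>EH. e \<inter> f = {} \<longrightarrow> path_image (cvH e) \<inter> path_image (cvH f) \<noteq> {} \<longrightarrow>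
       (\<exists>a\<in>A e. \<exists>b\<in>A f. path_image (cv a) \<inter> path_image (cv b) \<noteq> {})"
    and "finite EG"
  shows "gap_cover_planar_drawing (m * k) VH EH P cvH"
proof -
  obtain B where B: "bearing EG pos cv B"
    and covers: "\<forall>a\<in>EG. \<exists>C. C \<subseteq> VG - a \<and> finite C \<and> card C \<le> k \<and> B_cover B a C"
    using assms(1) unfolding gap_cover_planar_drawing_def by blast
  obtain C where C: "\<forall>a\<in>EG. C a \<subseteq> VG - a \<and> finite (C a) \<and> card (C a) \<le> k \<and> B_cover B a (C a)"
    using covers by (rule bchoice[THEN exE])
  have "\<forall>e\<in>EH. A e \<subseteq> EG \<and> (\<forall>a\<in>A e. a \<subseteq> (\<Union>u\<in>e. Vm u))"
    using assms(5) by (simp add: ball_conj_distrib)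
  then have "bearing EH P cvH (projected_bearing EH cvH A B)"
    by (rule bearing_projected_bearing[OF B assms(2,4) _ assms(6)])
  moreover have "\<exists>C'. C' \<subseteq> VH - e \<and> finite C' \<and> card C' \<le> m * k \<and>
      B_cover (projected_bearing EH cvH A B) e C'" if e: "e \<in> EH" for e
  proof -
    define Z where "Z = (\<Union>a\<in>A e. C a)"
    have A: "A e \<subseteq> EG" "card (A e) \<le> m"
      using bspec[OF assms(5) e] by simp_all
    have "finite (A e)" using finite_subset[OF A(1) assms(7)] .
    have "finite Z" unfolding Z_def using \<open>finite (A e)\<close> A(1) C by (intro finite_UN_I) auto
    have "card Z \<le> (\<Sum>a\<in>A e. card (C a))" unfolding Z_def using \<open>finite (A e)\<close> by (rule card_UN_le)
    also have "\<dots> \<le> of_nat (card (A e)) * k" by (rule sum_bounded_above) (use A(1) C in auto)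
    also have "\<dots> \<le> m * k" using A(2) by simp
    finally have "card Z \<le> m * k" .
    moreover have "finite {u \<in> VH - e. Vm u \<inter> Z \<noteq> {}}"
      using assms(2) unfolding simple_graph_def by simp
    moreover have "card {u \<in> VH - e. Vm u \<inter> Z \<noteq> {}} \<le> card Z"
      using assms(4) \<open>finite Z\<close> by (intro card_branch_sets_meeting_le) (auto simp: disjoint_family_on_def)
    moreover have "B_cover (projected_bearing EH cvH A B) e {u \<in> VH - e. Vm u \<inter> Z \<noteq> {}}"
      unfolding Z_def using assms(2,5) A(1) C by (intro B_cover_projected_bearing) auto
    ultimately show ?thesis by (intro exI[of _ "{u \<in> VH - e. Vm u \<inter> Z \<noteq> {}}"]) auto
  qed
  ultimately show ?thesis using assms(3) unfolding gap_cover_planar_drawing_def by blast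
qed

theorem lemma7:
  fixes k r :: nat
    and VG :: "'a set" and EG :: "'a set set"
    and VH :: "'b set" and EH :: "'b set set"
  assumes "simple_graph VG EG"
    and "simple_graph VH EH"
    and "gap_cover_planar k VG EG"
    and "shallow_minor r VH EH VG EG"
  shows "gap_cover_planar ((2 * r + 1) * k) VH EH"
proof -
  obtain pos cv where G: "gap_cover_planar_drawing k VG EG pos cv"
    using assms(3) unfolding gap_cover_planar_def by blast
  then have drawing_G: "drawing VG EG pos cv" unfolding gap_cover_planar_drawing_def by blast
  obtain mu where mu: "shallow_model r VH EH VG EG mu"
    using assms(4) unfolding shallow_minor_def by blast
  obtain c R where c: "\<forall>u\<in>VH. c u \<in> fst (mu u)"
    and ends: "\<forall>e\<in>EH. \<exists>v w. e = {v, w} \<and> hd (R e) = c v \<and> last (R e) = c w \<and> 2 \<le> length (R e)"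
    and routes: "\<forall>e\<in>EH. walk_edges (R e) \<subseteq> EG \<and> card (walk_edges (R e)) \<le> 2 * r + 1 \<and>
       (\<forall>a\<in>walk_edges (R e). a \<subseteq> (\<Union>u\<in>e. fst (mu u)))"
    by (rule shallow_model_routes[OF mu assms(2)])
  have "inj_on (pos \<circ> c) VH"
    using mu drawing_G c unfolding drawing_def by (intro inj_on_shallow_model_centres) auto
  moreover have "\<forall>e\<in>EH. walk_edges (R e) \<subseteq> EG" using routes by (simp add: ball_conj_distrib)
  ultimately obtain cvH where drawing_H: "drawing VH EH (pos \<circ> c) cvH"
    and meets: "\<forall>e\<in>EH. \<forall>f\<in>EH. path_image (cvH e) \<inter> path_image (cvH f) \<noteq> {} \<longrightarrow>
       (\<exists>a\<in>walk_edges (R e). \<exists>b\<in>walk_edges (R f). path_image (cv a) \<inter> path_image (cv b) \<noteq> {})"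
    using exists_drawing_along_walks[OF drawing_G assms(1,2) _ ends] by blast
  have "gap_cover_planar_drawing ((2 * r + 1) * k) VH EH (pos \<circ> c) cvH"
    using meets
    by (intro gap_cover_planar_drawing_projection[OF G assms(2) drawing_H
          disjoint_family_on_shallow_model[OF mu] routes _ simple_graph_finite_edges[OF assms(1)]]) simp
  then show ?thesis unfolding gap_cover_planar_def by blast
qed

end
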